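(* Let $q$ be a prime power and let $\mathbf{G}\in\mathbb{F}_q^{k\times n}$ be a generator matrix of a linear $[n,k]_q$ code. Consider a coded storage system with files $f_1,\dots,f_k$ in which, for each $i\in[k]$, file $f_i$ has a given list $\mathcal{R}_i=(R_{i,1},\dots,R_{i,t_i})$ of $t_i\ge1$ recovery sets, each of size $1$ or $2$, and all servers have service rate $1$. Then: (i) if $\boldsymbol{x}^\star=(x^\star_{i,j}: i\in[k], j\in[t_i])$ is a maximum fractional matching in the graph representation of the code, the vector $\boldsymbol{\lambda}$ with $\lambda_i=\sum_{j=1}^{t_i}x^\star_{i,j}$ is a maximum demand vector in $\mathcal{S}(\mathbf{G})$; and (ii) for every maximum demand vector $\boldsymbol{\lambda}^\star\in\mathcal{S}(\mathbf{G})$ there exists a maximum fractional matching $\boldsymbol{x}^\star$ in the graph representation with $\lambda^\star_i=\sum_{j=1}^{t_i}x^\star_{i,j}$ for all $i\in[k]$.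
   Context: Let $\mathbf{g}_1,\dots,\mathbf{g}_n$ be the columns of $\mathbf{G}$ and $\mathbf{e}_i$ the $i$-th unit vector of $\mathbb{F}_q^k$. A set $R\subseteq[n]$ is a recovery set for file $f_i$ if there exist nonzero $\alpha_j\in\mathbb{F}_q$ ($j\in R$) with $\sum_{j\in R}\alpha_j\mathbf{g}_j=\mathbf{e}_i$. The service rate region $\mathcal{S}(\mathbf{G})$ is the set of $\boldsymbol{\lambda}\in\mathbb{R}^k$ for which there exist real $\lambda_{i,j}\ge0$ with $\sum_{j=1}^{t_i}\lambda_{i,j}=\lambda_i$ for all $i\in[k]$ and $\sum_{i=1}^k\sum_{j\in[t_i]:\,l\in R_{i,j}}\lambda_{i,j}\le1$ for every server $l\in[n]$. A maximum demand vector is a $\boldsymbol{\lambda}\in\mathcal{S}(\mathbf{G})$ maximizing $\sum_{i=1}^k\lambda_i$ over $\mathcal{S}(\mathbf{G})$. The graph representation is the (multi)graph with vertex set $[n]$ plus one new dummy vertex $d_{i,j}$ for each recovery set $R_{i,j}$ of size 1, and edges indexed by $(i,j)$: if $R_{i,j}=\{a,b\}$ the edge joins $a$ and $b$; if $R_{i,j}=\{r\}$ it joins $r$ and $d_{i,j}$. A fractional matching assigns $x_e\in[0,1]$ to edges so that at each vertex the sum over incident edges is at most 1; a maximum fractional matching maximizes $\sum_e x_e$. *)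

theory Defs
  imports Complex_Main
begin

text \<open>Conventions: indices are 0-based. Files are indexed by i < k, servers by l < n,
  recovery sets of file i by j < t i. The generator matrix G :: nat => nat => 'a is
  given by its entries G r c (row r < k, column c < n); the column g_c is
  (G 0 c, ..., G (k-1) c).\<close>

definition generator_matrix :: "nat \<Rightarrow> nat \<Rightarrow> (nat \<Rightarrow> nat \<Rightarrow> 'a::field) \<Rightarrow> bool" where
  "generator_matrix k n G \<longleftrightarrow>
     (\<forall>c::nat \<Rightarrow> 'a. (\<forall>l<n. (\<Sum>r<k. c r * G r l) = 0) \<longrightarrow> (\<forall>r<k. c r = 0))"

definition is_recovery_set ::
  "nat \<Rightarrow> nat \<Rightarrow> (nat \<Rightarrow> nat \<Rightarrow> 'a::field) \<Rightarrow> nat \<Rightarrow> nat set \<Rightarrow> bool" where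
  "is_recovery_set k n G i R \<longleftrightarrow> R \<subseteq> {..<n} \<and>
     (\<exists>\<alpha>::nat \<Rightarrow> 'a. (\<forall>j\<in>R. \<alpha> j \<noteq> 0) \<and>
        (\<forall>r<k. (\<Sum>j\<in>R. \<alpha> j * G r j) = (if r = i then 1 else 0)))"

definition rec_idx :: "nat \<Rightarrow> (nat \<Rightarrow> nat) \<Rightarrow> (nat \<times> nat) set" where
  "rec_idx k t = {(i, j). i < k \<and> j < t i}"

definition service_rate_region ::
  "nat \<Rightarrow> nat \<Rightarrow> (nat \<Rightarrow> nat) \<Rightarrow> (nat \<Rightarrow> nat \<Rightarrow> nat set) \<Rightarrow> (nat \<Rightarrow> real) set" where
  "service_rate_region k n t R = {dem. \<exists>lam :: nat \<Rightarrow> nat \<Rightarrow> real.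
       (\<forall>(i, j)\<in>rec_idx k t. lam i j \<ge> 0) \<and>
       (\<forall>i<k. (\<Sum>j<t i. lam i j) = dem i) \<and>
       (\<forall>l<n. (\<Sum>(i, j)\<in>{(i, j)\<in>rec_idx k t. l \<in> R i j}. lam i j) \<le> 1)}"

definition max_demand_vector ::
  "nat \<Rightarrow> nat \<Rightarrow> (nat \<Rightarrow> nat) \<Rightarrow> (nat \<Rightarrow> nat \<Rightarrow> nat set) \<Rightarrow> (nat \<Rightarrow> real) \<Rightarrow> bool" where
  "max_demand_vector k n t R dem \<longleftrightarrow> dem \<in> service_rate_region k n t R \<and>
     (\<forall>\<mu>\<in>service_rate_region k n t R. (\<Sum>i<k. \<mu> i) \<le> (\<Sum>i<k. dem i))"

text \<open>Graph representation: vertices are servers and dummy vertices d_{i,j};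
  the edge (i,j) has endpoint set ends R i j.\<close>
datatype vertex = Server nat | Dummy nat nat

definition ends :: "(nat \<Rightarrow> nat \<Rightarrow> nat set) \<Rightarrow> nat \<Rightarrow> nat \<Rightarrow> vertex set" where
  "ends R i j = (if card (R i j) = 1 then Server ` R i j \<union> {Dummy i j} else Server ` R i j)"

definition graph_vertices :: "nat \<Rightarrow> nat \<Rightarrow> (nat \<Rightarrow> nat) \<Rightarrow> (nat \<Rightarrow> nat \<Rightarrow> nat set) \<Rightarrow> vertex set" where
  "graph_vertices k n t R = Server ` {..<n} \<union>
     {Dummy i j | i j. (i, j) \<in> rec_idx k t \<and> card (R i j) = 1}"

definition fractional_matching ::
  "nat \<Rightarrow> nat \<Rightarrow> (nat \<Rightarrow> nat) \<Rightarrow> (nat \<Rightarrow> nat \<Rightarrow> nat set) \<Rightarrow> (nat \<Rightarrow> nat \<Rightarrow> real) \<Rightarrow> bool" where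
  "fractional_matching k n t R x \<longleftrightarrow>
     (\<forall>(i, j)\<in>rec_idx k t. 0 \<le> x i j \<and> x i j \<le> 1) \<and>
     (\<forall>v\<in>graph_vertices k n t R.
        (\<Sum>(i, j)\<in>{(i, j)\<in>rec_idx k t. v \<in> ends R i j}. x i j) \<le> 1)"

definition max_fractional_matching ::
  "nat \<Rightarrow> nat \<Rightarrow> (nat \<Rightarrow> nat) \<Rightarrow> (nat \<Rightarrow> nat \<Rightarrow> nat set) \<Rightarrow> (nat \<Rightarrow> nat \<Rightarrow> real) \<Rightarrow> bool" where
  "max_fractional_matching k n t R x \<longleftrightarrow> fractional_matching k n t R x \<and>
     (\<forall>y. fractional_matching k n t R y \<longrightarrow>
        (\<Sum>(i, j)\<in>rec_idx k t. y i j) \<le> (\<Sum>(i, j)\<in>rec_idx k t. x i j))"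

end

theory Submission
  imports Defs
begin

text \<open>A fractional matching of the graph representation is the same thing as a feasible
  allocation of request rates to recovery sets: the server constraints coincide, a dummy
  vertex lies on its own edge only, so its constraint just says x i j \<le> 1, and this bound
  is implied by the constraint at any server of the (nonempty) recovery set. Since the
  demand of file i is the total weight of its edges, the service rate region is the image
  of the fractional matching polytope under the map x \<mapsto> (\<lambda>i. \<Sum>j<t i. x i j), which
  preserves the objective sum; hence maximisers correspond to each other.\<close>

definition feasible_allocation ::
  "nat \<Rightarrow> nat \<Rightarrow> (nat \<Rightarrow> nat) \<Rightarrow> (nat \<Rightarrow> nat \<Rightarrow> nat set) \<Rightarrow> (nat \<Rightarrow> nat \<Rightarrow> real) \<Rightarrow> bool" where
  "feasible_allocation k n t R lam \<longleftrightarrow>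
     (\<forall>(i, j)\<in>rec_idx k t. 0 \<le> lam i j) \<and>
     (\<forall>l<n. (\<Sum>(i, j)\<in>{(i, j)\<in>rec_idx k t. l \<in> R i j}. lam i j) \<le> 1)"

lemma rec_idx_eq_Sigma: "rec_idx k t = Sigma {..<k} (\<lambda>i. {..<t i})"
  by (auto simp: rec_idx_def)

lemma finite_rec_idx: "finite (rec_idx k t)"
  by (simp add: rec_idx_eq_Sigma)

lemma sum_rec_idx: "(\<Sum>(i, j)\<in>rec_idx k t. f i j) = (\<Sum>i<k. \<Sum>j<t i. f i j)"
  by (simp add: rec_idx_eq_Sigma sum.Sigma)

lemma edges_at_Server: "{(i, j)\<in>rec_idx k t. Server l \<in> ends R i j} = {(i, j)\<in>rec_idx k t. l \<in> R i j}"
  by (auto simp: ends_def)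

lemma edges_at_Dummy:
  assumes "(a, b) \<in> rec_idx k t" "card (R a b) = 1"
  shows "{(i, j)\<in>rec_idx k t. Dummy a b \<in> ends R i j} = {(a, b)}"
  using assms by (auto simp: ends_def split: if_splits)

lemma service_rate_region_iff:
  "dem \<in> service_rate_region k n t R \<longleftrightarrow>
     (\<exists>lam. feasible_allocation k n t R lam \<and> (\<forall>i<k. dem i = (\<Sum>j<t i. lam i j)))"
  unfolding service_rate_region_def feasible_allocation_def by auto

lemma fractional_matching_imp_feasible_allocation:
  assumes "fractional_matching k n t R x"
  shows "feasible_allocation k n t R x"
  unfolding feasible_allocation_def
proof (intro conjI allI impI)
  show "\<forall>(i, j)\<in>rec_idx k t. 0 \<le> x i j"
    using assms by (auto simp: fractional_matching_def)
next
  fix l assume "l < n"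
  then have "Server l \<in> graph_vertices k n t R"
    by (simp add: graph_vertices_def)
  with assms show "(\<Sum>(i, j)\<in>{(i, j)\<in>rec_idx k t. l \<in> R i j}. x i j) \<le> 1"
    unfolding fractional_matching_def edges_at_Server[symmetric] by blast
qed

lemma feasible_allocation_le_1:
  assumes "feasible_allocation k n t R x" "(i, j) \<in> rec_idx k t"
    and "l \<in> R i j" "l < n"
  shows "x i j \<le> 1"
proof -
  let ?E = "{(i, j)\<in>rec_idx k t. l \<in> R i j}"
  have "finite ?E"
    using finite_rec_idx by (rule finite_subset[rotated]) auto
  then have "x i j \<le> (\<Sum>(i, j)\<in>?E. x i j)"
    using member_le_sum[of "(i, j)" ?E "\<lambda>(i, j). x i j"] assms
    by (auto simp: feasible_allocation_def)
  also have "\<dots> \<le> 1"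
    using assms by (simp add: feasible_allocation_def)
  finally show ?thesis .
qed

lemma feasible_allocation_imp_fractional_matching:
  assumes feasible: "feasible_allocation k n t R x"
    and servers: "\<And>i j. (i, j) \<in> rec_idx k t \<Longrightarrow> R i j \<noteq> {} \<and> R i j \<subseteq> {..<n}"
  shows "fractional_matching k n t R x"
proof -
  have le_1: "x i j \<le> 1" if ij: "(i, j) \<in> rec_idx k t" for i j
  proof -
    obtain l where "l \<in> R i j" "l < n"
      using servers[OF ij] by blast
    with feasible ij show ?thesis
      by (rule feasible_allocation_le_1)
  qed
  have "(\<Sum>(i, j)\<in>{(i, j)\<in>rec_idx k t. v \<in> ends R i j}. x i j) \<le> 1"
    if "v \<in> graph_vertices k n t R" for v
  proof (cases v)
    case (Server l)
    with that have "l < n"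
      by (auto simp: graph_vertices_def)
    with feasible show ?thesis
      by (simp add: Server edges_at_Server feasible_allocation_def)
  next
    case (Dummy a b)
    with that have "(a, b) \<in> rec_idx k t" "card (R a b) = 1"
      by (auto simp: graph_vertices_def)
    then show ?thesis
      by (simp add: Dummy edges_at_Dummy le_1)
  qed
  with feasible le_1 show ?thesis
    by (auto simp: fractional_matching_def feasible_allocation_def)
qed

lemma service_rate_region_eq_matching_demands:
  assumes "\<And>i j. (i, j) \<in> rec_idx k t \<Longrightarrow> R i j \<noteq> {} \<and> R i j \<subseteq> {..<n}"
  shows "dem \<in> service_rate_region k n t R \<longleftrightarrow>
     (\<exists>x. fractional_matching k n t R x \<and> (\<forall>i<k. dem i = (\<Sum>j<t i. x i j)))"
  using assms unfolding service_rate_region_iff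
  by (metis fractional_matching_imp_feasible_allocation feasible_allocation_imp_fractional_matching)

lemma max_fractional_matching_imp_max_demand_vector:
  assumes servers: "\<And>i j. (i, j) \<in> rec_idx k t \<Longrightarrow> R i j \<noteq> {} \<and> R i j \<subseteq> {..<n}"
    and max: "max_fractional_matching k n t R x"
  shows "max_demand_vector k n t R (\<lambda>i. \<Sum>j<t i. x i j)"
  unfolding max_demand_vector_def
proof (intro conjI ballI)
  show "(\<lambda>i. \<Sum>j<t i. x i j) \<in> service_rate_region k n t R"
    using max by (auto simp: service_rate_region_eq_matching_demands[OF servers]
        max_fractional_matching_def)
next
  fix \<mu> assume "\<mu> \<in> service_rate_region k n t R"
  then obtain y where y: "fractional_matching k n t R y" "\<forall>i<k. \<mu> i = (\<Sum>j<t i. y i j)"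
    by (auto simp: service_rate_region_eq_matching_demands[OF servers])
  have "(\<Sum>i<k. \<mu> i) = (\<Sum>(i, j)\<in>rec_idx k t. y i j)"
    using y(2) by (simp add: sum_rec_idx)
  also have "\<dots> \<le> (\<Sum>(i, j)\<in>rec_idx k t. x i j)"
    using max y(1) by (simp add: max_fractional_matching_def)
  finally show "(\<Sum>i<k. \<mu> i) \<le> (\<Sum>i<k. \<Sum>j<t i. x i j)"
    by (simp add: sum_rec_idx)
qed

lemma max_demand_vector_imp_max_fractional_matching:
  assumes servers: "\<And>i j. (i, j) \<in> rec_idx k t \<Longrightarrow> R i j \<noteq> {} \<and> R i j \<subseteq> {..<n}"
    and max: "max_demand_vector k n t R dem"
  obtains x where "max_fractional_matching k n t R x" "\<forall>i<k. dem i = (\<Sum>j<t i. x i j)"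
proof -
  obtain x where x: "fractional_matching k n t R x" "\<forall>i<k. dem i = (\<Sum>j<t i. x i j)"
    using max by (auto simp: max_demand_vector_def service_rate_region_eq_matching_demands[OF servers])
  have "(\<Sum>(i, j)\<in>rec_idx k t. y i j) \<le> (\<Sum>(i, j)\<in>rec_idx k t. x i j)"
    if "fractional_matching k n t R y" for y
  proof -
    have "(\<lambda>i. \<Sum>j<t i. y i j) \<in> service_rate_region k n t R"
      using that by (auto simp: service_rate_region_eq_matching_demands[OF servers])
    then have "(\<Sum>i<k. \<Sum>j<t i. y i j) \<le> (\<Sum>i<k. dem i)"
      using max by (simp add: max_demand_vector_def)
    with x(2) show ?thesis
      by (simp add: sum_rec_idx)
  qed
  with x(1) have "max_fractional_matching k n t R x"
    by (simp add: max_fractional_matching_def)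
  then show ?thesis
    using x(2) by (rule that)
qed

theorem corollary1:
  fixes G :: "nat \<Rightarrow> nat \<Rightarrow> 'a::{finite, field}"
    and k n :: nat
    and t :: "nat \<Rightarrow> nat"
    and R :: "nat \<Rightarrow> nat \<Rightarrow> nat set"
  assumes "generator_matrix k n G"
    and "\<And>i. i < k \<Longrightarrow> t i \<ge> 1"
    and "\<And>i j. i < k \<Longrightarrow> j < t i \<Longrightarrow> is_recovery_set k n G i (R i j)"
    and "\<And>i j. i < k \<Longrightarrow> j < t i \<Longrightarrow> card (R i j) = 1 \<or> card (R i j) = 2"
  shows "(\<forall>x. max_fractional_matching k n t R x \<longrightarrow>
            max_demand_vector k n t R (\<lambda>i. \<Sum>j<t i. x i j))
       \<and> (\<forall>dem. max_demand_vector k n t R dem \<longrightarrow>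
            (\<exists>x. max_fractional_matching k n t R x \<and>
                 (\<forall>i<k. dem i = (\<Sum>j<t i. x i j))))"
proof -
  have servers: "R i j \<noteq> {} \<and> R i j \<subseteq> {..<n}" if "(i, j) \<in> rec_idx k t" for i j
  proof -
    from that have "i < k" "j < t i"
      by (auto simp: rec_idx_def)
    with assms(3,4) show ?thesis
      by (fastforce simp: is_recovery_set_def)
  qed
  show ?thesis
  proof (intro conjI allI impI)
    fix x assume "max_fractional_matching k n t R x"
    with servers show "max_demand_vector k n t R (\<lambda>i. \<Sum>j<t i. x i j)"
      by (rule max_fractional_matching_imp_max_demand_vector)
  next
    fix dem assume "max_demand_vector k n t R dem"
    with servers obtain x where
      "max_fractional_matching k n t R x" "\<forall>i<k. dem i = (\<Sum>j<t i. x i j)"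
      by (rule max_demand_vector_imp_max_fractional_matching)
    then show "\<exists>x. max_fractional_matching k n t R x \<and> (\<forall>i<k. dem i = (\<Sum>j<t i. x i j))"
      by blast
  qed
qed

end
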